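(* Let $\mathcal{M},\mathcal{L}\in\mathbb{C}^{2n\times 2n}$ with $(\mathcal{M},\mathcal{L})$ regular, let $(R_1,T_1)$ and $(R_2,T_2)$ be regular pairs with $R_i,T_i\in\mathbb{C}^{r_i\times r_i}$, and let $U_1\in\mathbb{C}^{2n\times r_1}$, $U_2\in\mathbb{C}^{2n\times r_2}$ have full column rank and satisfy $\mathcal{M}U_1T_1=\mathcal{L}U_1R_1$ and $\mathcal{M}U_2T_2=\mathcal{L}U_2R_2$. (i) If $(\mathcal{M},\mathcal{L})$ is a Hamiltonian pair and $\sigma(R_1,T_1)\cap\sigma(-R_2^H,T_2^H)=\emptyset$, then $U_1$ and $U_2$ are $\mathcal{J}$-orthogonal, i.e. $U_2^H\mathcal{J}U_1=0$. (ii) If $(\mathcal{M},\mathcal{L})$ is a symplectic pair and $\sigma(R_1,T_1)\cap\sigma(T_2^H,R_2^H)=\emptyset$, then $U_2^H\mathcal{J}U_1=0$.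
   Context: $\mathcal{J}=\mathcal{J}_n=\begin{bmatrix}0&I_n\\-I_n&0\end{bmatrix}$. A pair $(\mathcal{M},\mathcal{L})$ of $2n\times2n$ matrices is a Hamiltonian pair if $\mathcal{M}\mathcal{J}\mathcal{L}^H=-\mathcal{L}\mathcal{J}\mathcal{M}^H$, and a symplectic pair if $\mathcal{M}\mathcal{J}\mathcal{M}^H=\mathcal{L}\mathcal{J}\mathcal{L}^H$. A pair $(A,B)$ of square matrices is regular if $\det(A-\lambda B)\neq0$ for some $\lambda\in\mathbb{C}$; its spectrum $\sigma(A,B)$ is the set of $\lambda\in\mathbb{C}$ with $\det(A-\lambda B)=0$, together with $\infty$ if $B$ is singular. *)

theory Defs
  imports "Jordan_Normal_Form.Schur_Decomposition" "Jordan_Normal_Form.DL_Rank"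
begin

definition Jmat :: "nat \<Rightarrow> complex mat" where
  "Jmat n = four_block_mat (0\<^sub>m n n) (1\<^sub>m n) (- 1\<^sub>m n) (0\<^sub>m n n)"

definition hamiltonian_pair :: "nat \<Rightarrow> complex mat \<Rightarrow> complex mat \<Rightarrow> bool" where
  "hamiltonian_pair n M L \<longleftrightarrow>
     M * Jmat n * mat_adjoint L = - (L * Jmat n * mat_adjoint M)"

definition symplectic_pair :: "nat \<Rightarrow> complex mat \<Rightarrow> complex mat \<Rightarrow> bool" where
  "symplectic_pair n M L \<longleftrightarrow>
     M * Jmat n * mat_adjoint M = L * Jmat n * mat_adjoint L"

definition regular_pair :: "complex mat \<Rightarrow> complex mat \<Rightarrow> bool" where
  "regular_pair A B \<longleftrightarrow> (\<exists>z::complex. det (A - z \<cdot>\<^sub>m B) \<noteq> 0)"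

(* Spectrum of a pair, as a subset of the extended complex plane:
   Some \<lambda> for finite eigenvalues, None represents \<infinity>. *)
definition pair_spectrum :: "complex mat \<Rightarrow> complex mat \<Rightarrow> complex option set" where
  "pair_spectrum A B =
     {Some z | z. det (A - z \<cdot>\<^sub>m B) = 0} \<union> (if det B = 0 then {None} else {})"

definition full_column_rank :: "complex mat \<Rightarrow> bool" where
  "full_column_rank U \<longleftrightarrow> vec_space.rank (dim_row U) U = dim_col U"

end

theory Submission
  imports Defs "HOL-Library.Infinite_Set"
begin

text \<open>
  Pick a point \<open>z\<close> with \<open>M - z L\<close> invertible, purely imaginary in the Hamiltonian case and on
  the unit circle in the symplectic case, and multiply the pencil by \<open>(M - z L)\<^sup>-\<^sup>1\<close>. The
  resulting pencil \<open>(A, B)\<close> satisfies \<open>A = I + z B\<close>, and for such pencils the structure condition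
  on the rows (\<open>A J B\<^sup>H + B J A\<^sup>H = 0\<close>, resp. \<open>A J A\<^sup>H = B J B\<^sup>H\<close>) is equivalent to the one on the
  columns (\<open>A\<^sup>H J B + B\<^sup>H J A = 0\<close>, resp. \<open>A\<^sup>H J A = B\<^sup>H J B\<close>). With \<open>S\<^sub>i = R\<^sub>i - z T\<^sub>i\<close> the
  deflating relations become \<open>A U\<^sub>i S\<^sub>i = U\<^sub>i R\<^sub>i\<close> and \<open>B U\<^sub>i S\<^sub>i = U\<^sub>i T\<^sub>i\<close>, so sandwiching the column
  condition between \<open>(U\<^sub>2 S\<^sub>2)\<^sup>H\<close> and \<open>U\<^sub>1 S\<^sub>1\<close> shows that \<open>X = U\<^sub>2\<^sup>H J U\<^sub>1\<close> solves
  \<open>R\<^sub>2\<^sup>H X T\<^sub>1 + T\<^sub>2\<^sup>H X R\<^sub>1 = 0\<close>, resp. \<open>T\<^sub>2\<^sup>H X T\<^sub>1 = R\<^sub>2\<^sup>H X R\<^sub>1\<close>.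

  A generalized Sylvester equation \<open>G X T = H X R\<close> whose regular pencils \<open>(G, H)\<close> and \<open>(R, T)\<close>
  have disjoint spectra has only the solution \<open>X = 0\<close>: shifting both pencils to a common regular
  point reduces it to \<open>P X = X Q\<close> with no common eigenvalue, which is solved column by column
  after a Schur triangularization of \<open>Q\<close>.
\<close>

section \<open>Conjugate transposes and matrix arithmetic\<close>

lemma mat_adjoint_dim [simp]:
  "dim_row (mat_adjoint A) = dim_col A" "dim_col (mat_adjoint A) = dim_row A"
  unfolding mat_adjoint_def by auto

lemma mat_adjoint_index [simp]:
  fixes A :: "complex mat"
  shows "i < dim_col A \<Longrightarrow> j < dim_row A \<Longrightarrow> mat_adjoint A $$ (i, j) = cnj (A $$ (j, i))"
  unfolding mat_adjoint_def by (simp add: mat_of_rows_index)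

lemma mat_adjoint_carrier [simp]: "A \<in> carrier_mat m n \<Longrightarrow> mat_adjoint A \<in> carrier_mat n m"
  unfolding carrier_mat_def by auto

lemma mat_adjoint_mult:
  fixes A B :: "complex mat"
  assumes "A \<in> carrier_mat m k" "B \<in> carrier_mat k n"
  shows "mat_adjoint (A * B) = mat_adjoint B * mat_adjoint A"
  by (rule eq_matI) (use assms in \<open>auto simp: scalar_prod_def intro!: sum.cong\<close>)

lemma mat_adjoint_add:
  fixes A B :: "complex mat"
  assumes "A \<in> carrier_mat m n" "B \<in> carrier_mat m n"
  shows "mat_adjoint (A + B) = mat_adjoint A + mat_adjoint B"
  by (rule eq_matI) (use assms in auto)

lemma mat_adjoint_smult: "mat_adjoint (c \<cdot>\<^sub>m A) = cnj c \<cdot>\<^sub>m mat_adjoint (A :: complex mat)"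
  by (rule eq_matI) auto

lemma mat_adjoint_one [simp]: "mat_adjoint (1\<^sub>m n :: complex mat) = 1\<^sub>m n"
  by (rule eq_matI) auto

lemma det_mat_adjoint:
  fixes A :: "complex mat"
  assumes "A \<in> carrier_mat n n"
  shows "det (mat_adjoint A) = cnj (det A)"
proof -
  interpret cnj_hom: comm_ring_hom cnj
    by unfold_locales auto
  have "mat_adjoint A = transpose_mat (map_mat cnj A)"
    by (rule eq_matI) (use assms in auto)
  with assms show ?thesis by (simp add: det_transpose)
qed

text \<open>Versions of the ring laws for matrices with dimension side conditions, which \<open>simp\<close> discharges
  from carrier facts.\<close>

lemma mult_assoc_mat: "dim_col A = dim_row B \<Longrightarrow> dim_col B = dim_row C \<Longrightarrow> A * B * C = A * (B * C)"
  by (rule assoc_mult_mat[of A "dim_row A" "dim_col A" B "dim_col B" C "dim_col C"]) auto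

lemma mult_minus_distrib_mat':
  fixes A :: "'a :: ring mat"
  shows "dim_col A = dim_row B \<Longrightarrow> dim_row B = dim_row C \<Longrightarrow> dim_col B = dim_col C
    \<Longrightarrow> A * (B - C) = A * B - A * C"
  by (rule mult_minus_distrib_mat[of A "dim_row A" "dim_col A" B "dim_col B"]) auto

lemma minus_mult_distrib_mat':
  fixes A :: "'a :: ring mat"
  shows "dim_row A = dim_row B \<Longrightarrow> dim_col A = dim_col B \<Longrightarrow> dim_col A = dim_row C
    \<Longrightarrow> (A - B) * C = A * C - B * C"
  by (rule minus_mult_distrib_mat[of A "dim_row A" "dim_col A" B C "dim_col C"]) auto

lemma mult_add_distrib_mat':
  fixes A :: "'a :: semiring_0 mat"
  shows "dim_col A = dim_row B \<Longrightarrow> dim_row B = dim_row C \<Longrightarrow> dim_col B = dim_col C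
    \<Longrightarrow> A * (B + C) = A * B + A * C"
  by (rule mult_add_distrib_mat[of A "dim_row A" "dim_col A" B "dim_col B"]) auto

lemma add_mult_distrib_mat':
  fixes A :: "'a :: semiring_0 mat"
  shows "dim_row A = dim_row B \<Longrightarrow> dim_col A = dim_col B \<Longrightarrow> dim_col A = dim_row C
    \<Longrightarrow> (A + B) * C = A * C + B * C"
  by (rule add_mult_distrib_mat[of A "dim_row A" "dim_col A" B C "dim_col C"]) auto

lemma mult_smult_distrib_mat':
  fixes A :: "'a :: comm_semiring_0 mat"
  shows "dim_col A = dim_row B \<Longrightarrow> A * (c \<cdot>\<^sub>m B) = c \<cdot>\<^sub>m (A * B)"
  by (rule mult_smult_distrib[of A "dim_row A" "dim_col A" B "dim_col B"]) auto

lemma smult_mult_assoc_mat':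
  fixes A :: "'a :: comm_semiring_0 mat"
  shows "dim_col A = dim_row B \<Longrightarrow> (c \<cdot>\<^sub>m A) * B = c \<cdot>\<^sub>m (A * B)"
  by (rule mult_smult_assoc_mat[of A "dim_row A" "dim_col A" B "dim_col B"]) auto

lemmas mat_ring_simps = mult_assoc_mat mult_minus_distrib_mat' minus_mult_distrib_mat'
  mult_add_distrib_mat' add_mult_distrib_mat' mult_smult_distrib_mat' smult_mult_assoc_mat'

lemma uminus_zero_mat: "- 0\<^sub>m m n = (0\<^sub>m m n :: 'a :: group_add mat)"
  by (rule eq_matI) auto

lemma minus_eq_of_add_eq_zero_mat:
  fixes X Y :: "'a :: group_add mat"
  assumes "X \<in> carrier_mat m n" "Y \<in> carrier_mat m n" "X + Y = 0\<^sub>m m n"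
  shows "- X = Y"
proof (rule eq_matI)
  fix i j assume ij: "i < dim_row Y" "j < dim_col Y"
  have "(X + Y) $$ (i, j) = 0" using assms ij by simp
  then show "(- X) $$ (i, j) = Y $$ (i, j)"
    using assms(1,2) ij by (simp add: neg_eq_iff_add_eq_0)
qed (use assms in auto)

lemma mult_adjoint_congruence:
  fixes N X Y J :: "complex mat"
  assumes "N \<in> carrier_mat k k" "X \<in> carrier_mat k k" "Y \<in> carrier_mat k k" "J \<in> carrier_mat k k"
  shows "N * X * J * mat_adjoint (N * Y) = N * (X * J * mat_adjoint Y) * mat_adjoint N"
  using assms by (simp add: mat_adjoint_mult[of N k k Y k] mult_assoc_mat)

section \<open>Sylvester equations\<close>

lemma eigenvalue_iff_det:
  fixes A :: "'a :: field mat"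
  assumes "A \<in> carrier_mat n n"
  shows "eigenvalue A \<mu> \<longleftrightarrow> det (A - \<mu> \<cdot>\<^sub>m 1\<^sub>m n) = 0"
proof -
  have "char_matrix A \<mu> = A - \<mu> \<cdot>\<^sub>m 1\<^sub>m n"
    using assms by (intro eq_matI) (auto simp: char_matrix_def)
  with eigenvalue_det[OF assms] show ?thesis by simp
qed

lemma upper_triangular_diag_eigenvalue:
  fixes B :: "'a :: field mat"
  assumes B: "B \<in> carrier_mat n n" and ut: "upper_triangular B" and j: "j < n"
  shows "eigenvalue B (B $$ (j, j))"
proof -
  have "B $$ (j, j) \<in> set (diag_mat B)"
    using B j by (auto simp: diag_mat_def)
  then show ?thesis
    unfolding eigenvalue_root_char_poly[OF B] char_poly_upper_triangular[OF B ut]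
    by (auto simp: poly_prod_list prod_list_zero_iff)
qed

lemma col_mult_upper_triangular:
  fixes Y B :: "'a :: field mat"
  assumes Y: "Y \<in> carrier_mat a b" and B: "B \<in> carrier_mat b b" and ut: "upper_triangular B"
    and j: "j < b" and earlier: "\<And>k. k < j \<Longrightarrow> col Y k = 0\<^sub>v a"
  shows "col (Y * B) j = B $$ (j, j) \<cdot>\<^sub>v col Y j"
proof (rule eq_vecI)
  fix i assume "i < dim_vec (B $$ (j, j) \<cdot>\<^sub>v col Y j)"
  then have i: "i < a" using Y by simp
  have "col (Y * B) j $ i = (\<Sum>k\<in>{0..<b}. Y $$ (i, k) * B $$ (k, j))"
    using Y B i j by (simp add: scalar_prod_def)
  also have "\<dots> = (\<Sum>k\<in>{0..<b}. if k = j then Y $$ (i, j) * B $$ (j, j) else 0)"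
  proof (rule sum.cong[OF refl])
    fix k assume k: "k \<in> {0..<b}"
    consider "k < j" | "k = j" | "j < k" by linarith
    then show "Y $$ (i, k) * B $$ (k, j) = (if k = j then Y $$ (i, j) * B $$ (j, j) else 0)"
    proof cases
      case 1
      then have "col Y k $ i = 0" using earlier i by simp
      with 1 i j Y show ?thesis by simp
    next
      case 3
      with ut B k show ?thesis by (auto simp: upper_triangular_def)
    qed simp
  qed
  also have "\<dots> = Y $$ (i, j) * B $$ (j, j)" using j by simp
  finally show "col (Y * B) j $ i = (B $$ (j, j) \<cdot>\<^sub>v col Y j) $ i"
    using i j Y by simp
qed (use Y B in auto)

lemma sylvester_upper_triangular_unique:
  fixes P B Y :: "'a :: field mat"
  assumes P: "P \<in> carrier_mat a a" and B: "B \<in> carrier_mat b b" and ut: "upper_triangular B"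
    and Y: "Y \<in> carrier_mat a b" and eq: "P * Y = Y * B"
    and no_ev: "\<And>j. j < b \<Longrightarrow> \<not> eigenvalue P (B $$ (j, j))"
  shows "Y = 0\<^sub>m a b"
proof -
  have col_zero: "col Y j = 0\<^sub>v a" if "j < b" for j
    using that
  proof (induction j rule: less_induct)
    case (less j)
    have "P *\<^sub>v col Y j = B $$ (j, j) \<cdot>\<^sub>v col Y j"
      using col_mult2[OF P Y less.prems] eq col_mult_upper_triangular[OF Y B ut less.prems] less.IH
        less.prems by simp
    moreover have "col Y j \<in> carrier_vec a" using less.prems Y by simp
    ultimately have "col Y j \<noteq> 0\<^sub>v a \<Longrightarrow> eigenvalue P (B $$ (j, j))"
      using P unfolding eigenvalue_def eigenvector_def by (metis carrier_matD(1))
    with no_ev[OF less.prems] show ?case by blast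
  qed
  show ?thesis
  proof (rule eq_matI)
    fix i j assume ij: "i < dim_row (0\<^sub>m a b :: 'a mat)" "j < dim_col (0\<^sub>m a b :: 'a mat)"
    then have "col Y j $ i = 0" using col_zero[of j] by simp
    then show "Y $$ (i, j) = 0\<^sub>m a b $$ (i, j)" using ij Y by simp
  qed (use Y in auto)
qed

lemma sylvester_unique:
  fixes P Q X :: "complex mat"
  assumes P: "P \<in> carrier_mat a a" and Q: "Q \<in> carrier_mat b b" and X: "X \<in> carrier_mat a b"
    and eq: "P * X = X * Q"
    and no_common: "\<And>\<mu>. eigenvalue P \<mu> \<Longrightarrow> \<not> eigenvalue Q \<mu>"
  shows "X = 0\<^sub>m a b"
proof -
  obtain es where "char_poly Q = (\<Prod>e \<leftarrow> es. [:- e, 1:])"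
    using char_poly_factorized[OF Q] by auto
  from schur_upper_triangular[OF Q this]
  obtain B where B: "B \<in> carrier_mat b b" and ut: "upper_triangular B" and sim: "similar_mat Q B"
    by blast
  then obtain S Si where S: "S \<in> carrier_mat b b" and Si: "Si \<in> carrier_mat b b"
    and SiS: "Si * S = 1\<^sub>m b" and QB: "Q = S * B * Si"
    using Q unfolding similar_mat_def similar_mat_wit_def Let_def by auto
  have ev_B: "eigenvalue Q \<mu>" if "eigenvalue B \<mu>" for \<mu>
    using that unfolding eigenvalue_root_char_poly[OF Q] eigenvalue_root_char_poly[OF B]
      char_poly_similar[OF sim] .
  define Y where "Y = X * S"
  have Y: "Y \<in> carrier_mat a b" unfolding Y_def using X S by auto
  have "P * Y = X * Q * S"
    unfolding Y_def eq[symmetric] using P X S by (simp add: mult_assoc_mat)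
  also have "\<dots> = Y * B * (Si * S)"
    unfolding QB Y_def using X S B Si by (simp add: mult_assoc_mat)
  also have "\<dots> = Y * B"
    unfolding SiS using Y B by simp
  finally have "Y = 0\<^sub>m a b"
    using sylvester_upper_triangular_unique[OF P B ut Y] no_common ev_B
      upper_triangular_diag_eigenvalue[OF B ut] by blast
  then have "X * (S * Si) = 0\<^sub>m a b"
    unfolding Y_def using X S Si by (simp add: mult_assoc_mat[symmetric])
  moreover have "S * Si = 1\<^sub>m b"
    using SiS S Si by (metis mat_mult_left_right_inverse)
  ultimately show ?thesis using X by simp
qed

section \<open>Regular pencils\<close>

lemma det_nonzero_imp_inverse:
  fixes A :: "'a :: field mat"
  assumes "A \<in> carrier_mat n n" and "det A \<noteq> 0"
  obtains B where "B \<in> carrier_mat n n" "A * B = 1\<^sub>m n" "B * A = 1\<^sub>m n"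
proof -
  have "A \<in> Units (ring_mat TYPE('a) n ())"
    by (rule det_non_zero_imp_unit[OF assms])
  then show ?thesis
    using that unfolding Units_def ring_mat_simps by auto
qed

lemma pencil_roots_finite:
  fixes A B :: "complex mat"
  assumes A: "A \<in> carrier_mat n n" and B: "B \<in> carrier_mat n n" and reg: "regular_pair A B"
  shows "finite {z. det (A - z \<cdot>\<^sub>m B) = 0}"
proof -
  define P where "P = mat n n (\<lambda>(i, j). [:A $$ (i, j), - B $$ (i, j):])"
  have eval: "poly (det P) z = det (A - z \<cdot>\<^sub>m B)" for z
    by (rule poly_det_cong[of _ n]) (use A B in \<open>auto simp: P_def\<close>)
  from reg obtain z0 where "det (A - z0 \<cdot>\<^sub>m B) \<noteq> 0"
    unfolding regular_pair_def by auto
  then have "det P \<noteq> 0" using eval[of z0] by auto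
  from poly_roots_finite[OF this] show ?thesis unfolding eval .
qed

lemma inj_nat_avoids_finite:
  fixes f :: "nat \<Rightarrow> 'a"
  assumes "inj f" and "finite F"
  shows "\<exists>m. f m \<notin> F"
  using range_inj_infinite[OF assms(1)] assms(2) by (meson finite_subset image_subsetI)

lemma pair_spectrum_of_shifted_pencil:
  fixes G H :: "complex mat"
  assumes G: "G \<in> carrier_mat s s" and H: "H \<in> carrier_mat s s"
    and sing: "det (H - \<mu> \<cdot>\<^sub>m (G - z \<cdot>\<^sub>m H)) = 0"
  shows "(if \<mu> = 0 then None else Some (z + 1 / \<mu>)) \<in> pair_spectrum G H"
proof (cases "\<mu> = 0")
  case True
  have "H - \<mu> \<cdot>\<^sub>m (G - z \<cdot>\<^sub>m H) = H"
    using True G H by (intro eq_matI) auto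
  with sing True show ?thesis unfolding pair_spectrum_def by simp
next
  case False
  have "H - \<mu> \<cdot>\<^sub>m (G - z \<cdot>\<^sub>m H) = (- \<mu>) \<cdot>\<^sub>m (G - (z + 1 / \<mu>) \<cdot>\<^sub>m H)"
    using False G H by (intro eq_matI) (auto simp: field_simps)
  with sing False G H have "det (G - (z + 1 / \<mu>) \<cdot>\<^sub>m H) = 0"
    by simp
  with False show ?thesis unfolding pair_spectrum_def by simp
qed

lemma eigenvalue_left_resolvent_pair_spectrum:
  fixes G H Gi :: "complex mat"
  assumes G: "G \<in> carrier_mat s s" and H: "H \<in> carrier_mat s s" and Gi: "Gi \<in> carrier_mat s s"
    and inv: "Gi * (G - z \<cdot>\<^sub>m H) = 1\<^sub>m s" and ev: "eigenvalue (Gi * H) \<mu>"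
  shows "(if \<mu> = 0 then None else Some (z + 1 / \<mu>)) \<in> pair_spectrum G H"
proof (rule pair_spectrum_of_shifted_pencil[OF G H])
  have GzH: "G - z \<cdot>\<^sub>m H \<in> carrier_mat s s" and shifted: "H - \<mu> \<cdot>\<^sub>m (G - z \<cdot>\<^sub>m H) \<in> carrier_mat s s"
    using G H by (simp_all add: minus_carrier_mat)
  have "Gi * H - \<mu> \<cdot>\<^sub>m 1\<^sub>m s = Gi * (H - \<mu> \<cdot>\<^sub>m (G - z \<cdot>\<^sub>m H))"
    using Gi H GzH inv by (simp add: mat_ring_simps)
  with ev Gi H have "det Gi * det (H - \<mu> \<cdot>\<^sub>m (G - z \<cdot>\<^sub>m H)) = 0"
    by (simp add: eigenvalue_iff_det[of _ s] det_mult[OF Gi shifted])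
  moreover have "det Gi \<noteq> 0"
    using det_mult[OF Gi GzH] inv by auto
  ultimately show "det (H - \<mu> \<cdot>\<^sub>m (G - z \<cdot>\<^sub>m H)) = 0" by simp
qed

lemma eigenvalue_right_resolvent_pair_spectrum:
  fixes R T Ri :: "complex mat"
  assumes R: "R \<in> carrier_mat r r" and T: "T \<in> carrier_mat r r" and Ri: "Ri \<in> carrier_mat r r"
    and inv: "(R - z \<cdot>\<^sub>m T) * Ri = 1\<^sub>m r" and ev: "eigenvalue (T * Ri) \<mu>"
  shows "(if \<mu> = 0 then None else Some (z + 1 / \<mu>)) \<in> pair_spectrum R T"
proof (rule pair_spectrum_of_shifted_pencil[OF R T])
  have RzT: "R - z \<cdot>\<^sub>m T \<in> carrier_mat r r" and shifted: "T - \<mu> \<cdot>\<^sub>m (R - z \<cdot>\<^sub>m T) \<in> carrier_mat r r"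
    using R T by (simp_all add: minus_carrier_mat)
  have "T * Ri - \<mu> \<cdot>\<^sub>m 1\<^sub>m r = (T - \<mu> \<cdot>\<^sub>m (R - z \<cdot>\<^sub>m T)) * Ri"
    using Ri T RzT inv by (simp add: mat_ring_simps)
  with ev Ri T have "det (T - \<mu> \<cdot>\<^sub>m (R - z \<cdot>\<^sub>m T)) * det Ri = 0"
    by (simp add: eigenvalue_iff_det[of _ r] det_mult[OF shifted Ri])
  moreover have "det Ri \<noteq> 0"
    using det_mult[OF RzT Ri] inv by auto
  ultimately show "det (T - \<mu> \<cdot>\<^sub>m (R - z \<cdot>\<^sub>m T)) = 0" by simp
qed

lemma regular_pairs_common_point:
  fixes G H R T :: "complex mat"
  assumes "G \<in> carrier_mat s s" "H \<in> carrier_mat s s" "regular_pair G H"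
    and "R \<in> carrier_mat r r" "T \<in> carrier_mat r r" "regular_pair R T"
  obtains z where "det (G - z \<cdot>\<^sub>m H) \<noteq> 0" "det (R - z \<cdot>\<^sub>m T) \<noteq> 0"
proof -
  have "finite ({z. det (G - z \<cdot>\<^sub>m H) = 0} \<union> {z. det (R - z \<cdot>\<^sub>m T) = 0})"
    using pencil_roots_finite[OF assms(1-3)] pencil_roots_finite[OF assms(4-6)] by blast
  from ex_new_if_finite[OF infinite_UNIV_char_0 this]
  obtain z :: complex where "z \<notin> {z. det (G - z \<cdot>\<^sub>m H) = 0} \<union> {z. det (R - z \<cdot>\<^sub>m T) = 0}" ..
  with that show ?thesis by blast
qed

lemma pencil_equation_shift:
  fixes G H R T X :: "complex mat"
  assumes G: "G \<in> carrier_mat s s" and H: "H \<in> carrier_mat s s"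
    and R: "R \<in> carrier_mat r r" and T: "T \<in> carrier_mat r r" and X: "X \<in> carrier_mat s r"
    and eq: "G * X * T = H * X * R"
  shows "(G - z \<cdot>\<^sub>m H) * X * T = H * X * (R - z \<cdot>\<^sub>m T)"
proof -
  have "(G - z \<cdot>\<^sub>m H) * X * T = G * X * T - z \<cdot>\<^sub>m (H * X * T)"
    using G H X T by (simp add: mat_ring_simps)
  also have "\<dots> = H * X * R - z \<cdot>\<^sub>m (H * X * T)"
    unfolding eq ..
  also have "\<dots> = H * X * (R - z \<cdot>\<^sub>m T)"
    using H X R T by (simp add: mat_ring_simps)
  finally show ?thesis .
qed

lemma regular_pair_imaginary_point:
  fixes M L :: "complex mat"
  assumes "M \<in> carrier_mat k k" "L \<in> carrier_mat k k" "regular_pair M L"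
  obtains z where "cnj z = - z" "det (M - z \<cdot>\<^sub>m L) \<noteq> 0"
proof -
  have "inj (\<lambda>m::nat. \<i> * of_nat m)"
    by (rule injI) (simp add: complex_eq_iff)
  from inj_nat_avoids_finite[OF this pencil_roots_finite[OF assms]]
  obtain m :: nat where "det (M - (\<i> * of_nat m) \<cdot>\<^sub>m L) \<noteq> 0" by auto
  moreover have "cnj (\<i> * of_nat m) = - (\<i> * of_nat m)" by simp
  ultimately show ?thesis using that by blast
qed

text \<open>The Cayley transform \<open>m \<mapsto> (1 + i m) / (1 - i m)\<close> injects \<open>\<nat>\<close> into the unit circle.\<close>

lemma regular_pair_unimodular_point:
  fixes M L :: "complex mat"
  assumes "M \<in> carrier_mat k k" "L \<in> carrier_mat k k" "regular_pair M L"
  obtains z where "cnj z * z = 1" "det (M - z \<cdot>\<^sub>m L) \<noteq> 0"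
proof -
  define c :: "nat \<Rightarrow> complex" where "c m = (1 + \<i> * of_nat m) / (1 - \<i> * of_nat m)" for m
  have nonzero: "1 - \<i> * of_nat m \<noteq> 0" "1 + \<i> * of_nat m \<noteq> 0" for m :: nat
    by (simp_all add: complex_eq_iff)
  have "inj c"
  proof (rule injI)
    fix x y assume "c x = c y"
    then have "(1 + \<i> * of_nat x) * (1 - \<i> * of_nat y) = (1 + \<i> * of_nat y) * (1 - \<i> * of_nat x)"
      unfolding c_def using nonzero by (simp add: field_simps)
    then show "x = y" by (simp add: complex_eq_iff algebra_simps)
  qed
  from inj_nat_avoids_finite[OF this pencil_roots_finite[OF assms]]
  obtain m where "det (M - c m \<cdot>\<^sub>m L) \<noteq> 0" by auto
  moreover have "cnj (c m) * c m = 1"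
  proof -
    have "1 + complex_of_nat m * complex_of_nat m \<noteq> 0"
      by (metis of_nat_1 of_nat_add of_nat_eq_0_iff of_nat_mult add_is_0 one_neq_zero)
    then show ?thesis unfolding c_def using nonzero by (simp add: field_simps)
  qed
  ultimately show ?thesis using that by blast
qed

text \<open>Shifting both pencils to a common regular point \<open>z\<close> turns the equation into
  \<open>P X = X Q\<close> with \<open>P = (G - z H)\<^sup>-\<^sup>1 H\<close> and \<open>Q = T (R - z T)\<^sup>-\<^sup>1\<close>; a common eigenvalue
  \<open>\<mu>\<close> of \<open>P\<close> and \<open>Q\<close> would give the common spectral point \<open>z + 1/\<mu>\<close>, or \<open>\<infinity>\<close> if \<open>\<mu> = 0\<close>.\<close>

lemma pencil_sylvester_unique:
  fixes G H R T X :: "complex mat"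
  assumes G: "G \<in> carrier_mat s s" and H: "H \<in> carrier_mat s s"
    and R: "R \<in> carrier_mat r r" and T: "T \<in> carrier_mat r r" and X: "X \<in> carrier_mat s r"
    and reg_GH: "regular_pair G H" and reg_RT: "regular_pair R T"
    and eq: "G * X * T = H * X * R"
    and disjoint: "pair_spectrum R T \<inter> pair_spectrum G H = {}"
  shows "X = 0\<^sub>m s r"
proof -
  obtain z where "det (G - z \<cdot>\<^sub>m H) \<noteq> 0" "det (R - z \<cdot>\<^sub>m T) \<noteq> 0"
    using regular_pairs_common_point[OF G H reg_GH R T reg_RT] .
  moreover define Gz Rz where "Gz = G - z \<cdot>\<^sub>m H" and "Rz = R - z \<cdot>\<^sub>m T"
  ultimately have det_Gz: "det Gz \<noteq> 0" and det_Rz: "det Rz \<noteq> 0"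
    by simp_all
  have Gz: "Gz \<in> carrier_mat s s" and Rz: "Rz \<in> carrier_mat r r"
    unfolding Gz_def Rz_def using G H R T by auto
  obtain Gi where Gi: "Gi \<in> carrier_mat s s" "Gi * Gz = 1\<^sub>m s"
    using det_nonzero_imp_inverse[OF Gz det_Gz] by blast
  obtain Ri where Ri: "Ri \<in> carrier_mat r r" "Rz * Ri = 1\<^sub>m r"
    using det_nonzero_imp_inverse[OF Rz det_Rz] by blast
  have shifted: "Gz * X * T = H * X * Rz"
    unfolding Gz_def Rz_def by (rule pencil_equation_shift[OF G H R T X eq])
  have "X * (T * Ri) = Gi * Gz * X * T * Ri"
    unfolding Gi(2) using X T Ri by (simp add: mult_assoc_mat)
  also have "\<dots> = Gi * H * X * (Rz * Ri)"
    using Gi(1) Gz X T Ri(1) H Rz by (simp add: mult_assoc_mat shifted[unfolded mult_assoc_mat])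
  also have "\<dots> = Gi * H * X"
    unfolding Ri(2) using Gi H X by simp
  finally have PQ: "Gi * H * X = X * (T * Ri)" ..
  show ?thesis
  proof (rule sylvester_unique[OF _ _ X PQ])
    fix \<mu> assume "eigenvalue (Gi * H) \<mu>"
    then show "\<not> eigenvalue (T * Ri) \<mu>"
      using eigenvalue_left_resolvent_pair_spectrum[OF G H Gi(1) Gi(2)[unfolded Gz_def]]
        eigenvalue_right_resolvent_pair_spectrum[OF R T Ri(1) Ri(2)[unfolded Rz_def]]
        disjoint by blast
  qed (use Gi H T Ri in auto)
qed

lemma regular_pair_neg_adjoint:
  fixes R T :: "complex mat"
  assumes R: "R \<in> carrier_mat r r" and T: "T \<in> carrier_mat r r" and reg: "regular_pair R T"
  shows "regular_pair (- mat_adjoint R) (mat_adjoint T)"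
proof -
  from reg obtain w where w: "det (R - w \<cdot>\<^sub>m T) \<noteq> 0"
    unfolding regular_pair_def by auto
  have "- mat_adjoint R - (- cnj w) \<cdot>\<^sub>m mat_adjoint T = - mat_adjoint (R - w \<cdot>\<^sub>m T)"
    by (rule eq_matI) (use R T in auto)
  moreover have "det (- mat_adjoint (R - w \<cdot>\<^sub>m T)) \<noteq> 0"
    using w R T by (simp add: det_0_negate[of _ r] det_mat_adjoint[of _ r] minus_carrier_mat)
  ultimately show ?thesis
    unfolding regular_pair_def by metis
qed

lemma regular_pair_swap_adjoint:
  fixes R T :: "complex mat"
  assumes R: "R \<in> carrier_mat r r" and T: "T \<in> carrier_mat r r" and reg: "regular_pair R T"
  shows "regular_pair (mat_adjoint T) (mat_adjoint R)"
proof -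
  have "finite (insert 0 {w. det (R - w \<cdot>\<^sub>m T) = 0})"
    using pencil_roots_finite[OF R T reg] by simp
  from ex_new_if_finite[OF infinite_UNIV_char_0 this]
  obtain w :: complex where w: "w \<noteq> 0" "det (R - w \<cdot>\<^sub>m T) \<noteq> 0" by auto
  have "mat_adjoint T - cnj (1 / w) \<cdot>\<^sub>m mat_adjoint R = mat_adjoint ((- 1 / w) \<cdot>\<^sub>m (R - w \<cdot>\<^sub>m T))"
    by (rule eq_matI) (use R T w(1) in \<open>auto simp: field_simps\<close>)
  moreover have "det (mat_adjoint ((- 1 / w) \<cdot>\<^sub>m (R - w \<cdot>\<^sub>m T))) \<noteq> 0"
    using w R T by (simp add: det_mat_adjoint[of _ r] minus_carrier_mat)
  ultimately show ?thesis
    unfolding regular_pair_def by metis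
qed

section \<open>Hamiltonian and symplectic pencils\<close>

lemma Jmat_carrier [simp]: "Jmat n \<in> carrier_mat (2 * n) (2 * n)"
proof -
  have "Jmat n \<in> carrier_mat (n + n) (n + n)"
    unfolding Jmat_def by (rule four_block_carrier_mat) auto
  then show ?thesis by (simp add: mult_2)
qed

lemma Jmat_squared: "Jmat n * Jmat n = - 1\<^sub>m (2 * n)"
proof -
  have "Jmat n * Jmat n = four_block_mat (- 1\<^sub>m n) (0\<^sub>m n n) (0\<^sub>m n n) (- 1\<^sub>m n)"
    unfolding Jmat_def
    by (subst mult_four_block_mat[OF zero_carrier_mat one_carrier_mat
          uminus_carrier_mat[OF one_carrier_mat] zero_carrier_mat zero_carrier_mat
          one_carrier_mat uminus_carrier_mat[OF one_carrier_mat] zero_carrier_mat]) auto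
  also have "\<dots> = - 1\<^sub>m (2 * n)"
    by (rule eq_matI) (auto simp: mult_2)
  finally show ?thesis .
qed

lemma pencil_normal_form:
  fixes M L :: "complex mat"
  assumes M: "M \<in> carrier_mat k k" and L: "L \<in> carrier_mat k k" and nonsingular: "det (M - z \<cdot>\<^sub>m L) \<noteq> 0"
  obtains N where "N \<in> carrier_mat k k" "N * M = 1\<^sub>m k + z \<cdot>\<^sub>m (N * L)"
proof -
  have MzL: "M - z \<cdot>\<^sub>m L \<in> carrier_mat k k" using M L by (simp add: minus_carrier_mat)
  obtain N where N: "N \<in> carrier_mat k k" and inv: "N * (M - z \<cdot>\<^sub>m L) = 1\<^sub>m k"
    using det_nonzero_imp_inverse[OF MzL nonsingular] by blast
  have "N * M = N * (M - z \<cdot>\<^sub>m L) + z \<cdot>\<^sub>m (N * L)"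
    using N M L by (simp add: mat_ring_simps) (rule eq_matI, auto)
  with N inv that show ?thesis by simp
qed

lemma deflating_mult_left:
  fixes N M L U T R :: "'a :: semiring_0 mat"
  assumes "N \<in> carrier_mat k k" "M \<in> carrier_mat k k" "L \<in> carrier_mat k k"
    and "U \<in> carrier_mat k r" "T \<in> carrier_mat r r" "R \<in> carrier_mat r r"
    and "M * U * T = L * U * R"
  shows "N * M * U * T = N * L * U * R"
proof -
  have "N * M * U * T = N * (M * U * T)" using assms by (simp add: mult_assoc_mat)
  also have "\<dots> = N * (L * U * R)" unfolding assms(7) ..
  also have "\<dots> = N * L * U * R" using assms by (simp add: mult_assoc_mat)
  finally show ?thesis .
qed

lemma normalized_pencil_deflating:
  fixes A B U T R :: "complex mat"
  assumes B: "B \<in> carrier_mat k k" and U: "U \<in> carrier_mat k r"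
    and T: "T \<in> carrier_mat r r" and R: "R \<in> carrier_mat r r"
    and normal: "A = 1\<^sub>m k + z \<cdot>\<^sub>m B" and deflating: "A * U * T = B * U * R"
  shows "B * U * (R - z \<cdot>\<^sub>m T) = U * T" "A * U * (R - z \<cdot>\<^sub>m T) = U * R"
proof -
  have "B * U * R = U * T + z \<cdot>\<^sub>m (B * U * T)"
    unfolding deflating[symmetric] normal using B U T by (simp add: mat_ring_simps)
  then show BU: "B * U * (R - z \<cdot>\<^sub>m T) = U * T"
    using B U T R by (simp add: mat_ring_simps) (rule eq_matI, auto)
  have "A * U * (R - z \<cdot>\<^sub>m T) = U * (R - z \<cdot>\<^sub>m T) + z \<cdot>\<^sub>m (B * U * (R - z \<cdot>\<^sub>m T))"
    unfolding normal using B U T R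
    by (simp add: mat_ring_simps minus_carrier_mat) (rule eq_matI, auto simp: algebra_simps)
  also have "\<dots> = U * R"
    unfolding BU using U T R by (simp add: mat_ring_simps) (rule eq_matI, auto)
  finally show "A * U * (R - z \<cdot>\<^sub>m T) = U * R" .
qed

lemma adjoint_sandwich:
  fixes P Q K U1 U2 S1 S2 P1 Q2 :: "complex mat"
  assumes P: "P \<in> carrier_mat k k" and Q: "Q \<in> carrier_mat k k" and K: "K \<in> carrier_mat k k"
    and U1: "U1 \<in> carrier_mat k r1" and U2: "U2 \<in> carrier_mat k r2"
    and S1: "S1 \<in> carrier_mat r1 r1" and P1: "P1 \<in> carrier_mat r1 r1"
    and S2: "S2 \<in> carrier_mat r2 r2" and Q2: "Q2 \<in> carrier_mat r2 r2"
    and PU1: "P * U1 * S1 = U1 * P1" and QU2: "Q * U2 * S2 = U2 * Q2"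
  shows "mat_adjoint Q2 * (mat_adjoint U2 * K * U1) * P1
    = mat_adjoint S2 * mat_adjoint U2 * (mat_adjoint Q * K * P) * U1 * S1"
proof -
  have "mat_adjoint Q2 * mat_adjoint U2 = mat_adjoint (Q * U2 * S2)"
    unfolding QU2 using U2 Q2 by (simp add: mat_adjoint_mult)
  also have "\<dots> = mat_adjoint S2 * mat_adjoint (Q * U2)"
    by (rule mat_adjoint_mult) (use Q U2 S2 in auto)
  also have "\<dots> = mat_adjoint S2 * mat_adjoint U2 * mat_adjoint Q"
    using Q U2 S2 by (simp add: mat_adjoint_mult[OF Q U2] mult_assoc_mat)
  finally have left: "mat_adjoint Q2 * mat_adjoint U2 = mat_adjoint S2 * mat_adjoint U2 * mat_adjoint Q" .
  have "mat_adjoint Q2 * (mat_adjoint U2 * K * U1) * P1 = mat_adjoint Q2 * mat_adjoint U2 * K * (U1 * P1)"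
    using Q2 U2 K U1 P1 by (simp add: mult_assoc_mat)
  also have "\<dots> = mat_adjoint S2 * mat_adjoint U2 * mat_adjoint Q * K * (P * U1 * S1)"
    unfolding left PU1 ..
  finally show ?thesis
    using Q K P U1 U2 S1 S2 by (simp add: mult_assoc_mat)
qed

lemma involution_swap:
  fixes J W V :: "'a :: comm_ring_1 mat"
  assumes J: "J \<in> carrier_mat k k" and W: "W \<in> carrier_mat k k" and V: "V \<in> carrier_mat k k"
    and JJ: "J * J = - 1\<^sub>m k" and skew: "W * J + J * V = 0\<^sub>m k k"
  shows "J * W + V * J = 0\<^sub>m k k"
proof -
  have "J * (W * J + J * V) * J = J * W * (J * J) + (J * J) * V * J"
    using J W V by (simp add: mat_ring_simps)
  also have "\<dots> = - (J * W + V * J)"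
    unfolding JJ using J W V by (simp add: mat_ring_simps) (rule eq_matI, auto)
  finally have "- (J * W + V * J) = 0\<^sub>m k k"
    unfolding skew using J by simp
  then have "- (- (J * W + V * J)) = - 0\<^sub>m k k" by simp
  then show ?thesis by (simp add: uminus_zero_mat)
qed

text \<open>For imaginary \<open>z\<close> the row condition reduces to \<open>B J + J B\<^sup>H = 0\<close> and the column condition
  to \<open>J B + B\<^sup>H J = 0\<close>; conjugation by \<open>J\<close> turns the first into the second.\<close>

lemma hamiltonian_normalized_column:
  fixes A B J :: "complex mat"
  assumes B: "B \<in> carrier_mat k k" and J: "J \<in> carrier_mat k k" and JJ: "J * J = - 1\<^sub>m k"
    and normal: "A = 1\<^sub>m k + z \<cdot>\<^sub>m B" and imag: "cnj z = - z"
    and row: "A * J * mat_adjoint B = - (B * J * mat_adjoint A)"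
  shows "mat_adjoint A * J * B + mat_adjoint B * J * A = 0\<^sub>m k k"
proof -
  let ?C = "mat_adjoint B"
  have C: "?C \<in> carrier_mat k k" using B by simp
  have adjA: "mat_adjoint A = 1\<^sub>m k + (- z) \<cdot>\<^sub>m ?C"
    unfolding normal using B by (subst mat_adjoint_add[of _ k k]) (auto simp: mat_adjoint_smult imag)
  have expanded: "J * ?C + z \<cdot>\<^sub>m (B * (J * ?C)) = - (B * J + (- z) \<cdot>\<^sub>m (B * (J * ?C)))"
    using row unfolding adjA unfolding normal using B J C by (simp add: mat_ring_simps)
  have "B * J + J * ?C = 0\<^sub>m k k"
  proof (rule eq_matI)
    fix i j assume ij: "i < dim_row (0\<^sub>m k k :: complex mat)" "j < dim_col (0\<^sub>m k k :: complex mat)"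
    have "(J * ?C + z \<cdot>\<^sub>m (B * (J * ?C))) $$ (i, j) = (- (B * J + (- z) \<cdot>\<^sub>m (B * (J * ?C)))) $$ (i, j)"
      unfolding expanded ..
    then show "(B * J + J * ?C) $$ (i, j) = 0\<^sub>m k k $$ (i, j)"
      using ij B J C by (simp add: algebra_simps)
  qed (use B J in auto)
  from involution_swap[OF J B C JJ this]
  have "J * B + ?C * J = 0\<^sub>m k k" .
  note swapped = this
  show ?thesis
  proof (rule eq_matI)
    fix i j assume ij: "i < dim_row (0\<^sub>m k k :: complex mat)" "j < dim_col (0\<^sub>m k k :: complex mat)"
    have "(J * B + ?C * J) $$ (i, j) = 0"
      using swapped ij by simp
    then show "(mat_adjoint A * J * B + ?C * J * A) $$ (i, j) = 0\<^sub>m k k $$ (i, j)"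
      unfolding adjA unfolding normal using ij B J C by (simp add: mat_ring_simps algebra_simps)
  qed (use B J C in \<open>auto simp: normal\<close>)
qed

text \<open>For \<open>|z| = 1\<close> the row condition reduces to \<open>(I + z B) J + J (cnj z B\<^sup>H) = 0\<close> and the column
  condition to its image under conjugation by \<open>J\<close>.\<close>

lemma symplectic_normalized_column:
  fixes A B J :: "complex mat"
  assumes B: "B \<in> carrier_mat k k" and J: "J \<in> carrier_mat k k" and JJ: "J * J = - 1\<^sub>m k"
    and normal: "A = 1\<^sub>m k + z \<cdot>\<^sub>m B" and unimodular: "cnj z * z = 1"
    and row: "A * J * mat_adjoint A = B * J * mat_adjoint B"
  shows "mat_adjoint A * J * A = mat_adjoint B * J * B"
proof -
  let ?C = "mat_adjoint B" and ?W = "1\<^sub>m k + z \<cdot>\<^sub>m B"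
  have C: "?C \<in> carrier_mat k k" and W: "?W \<in> carrier_mat k k" using B by auto
  have unimodular': "z * cnj z = 1"
    using unimodular by (simp add: mult.commute)
  have cancel: "z * (cnj z * x) = x" "cnj z * (z * x) = x" for x
    by (simp_all add: mult.assoc[symmetric] unimodular unimodular')
  have adjA: "mat_adjoint A = 1\<^sub>m k + cnj z \<cdot>\<^sub>m ?C"
    unfolding normal using B by (subst mat_adjoint_add[of _ k k]) (auto simp: mat_adjoint_smult)
  have "J + cnj z \<cdot>\<^sub>m (J * ?C) + z \<cdot>\<^sub>m (B * J) = 0\<^sub>m k k"
  proof (rule eq_matI)
    fix i j assume ij: "i < dim_row (0\<^sub>m k k :: complex mat)" "j < dim_col (0\<^sub>m k k :: complex mat)"
    have "(A * J * mat_adjoint A) $$ (i, j) = (B * J * ?C) $$ (i, j)"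
      unfolding row ..
    then show "(J + cnj z \<cdot>\<^sub>m (J * ?C) + z \<cdot>\<^sub>m (B * J)) $$ (i, j) = 0\<^sub>m k k $$ (i, j)"
      unfolding adjA unfolding normal using ij B J C
      by (simp add: mat_ring_simps algebra_simps unimodular unimodular' cancel neg_eq_iff_add_eq_0)
  qed (use B J C in auto)
  moreover have "?W * J + J * (cnj z \<cdot>\<^sub>m ?C) = J + cnj z \<cdot>\<^sub>m (J * ?C) + z \<cdot>\<^sub>m (B * J)"
    using B J C by (simp add: mat_ring_simps) (rule eq_matI, auto)
  ultimately have "J * ?W + cnj z \<cdot>\<^sub>m ?C * J = 0\<^sub>m k k"
    using involution_swap[OF J W _ JJ, of "cnj z \<cdot>\<^sub>m ?C"] C by simp
  then have swapped: "J + (z \<cdot>\<^sub>m (J * B) + cnj z \<cdot>\<^sub>m (?C * J)) = 0\<^sub>m k k"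
    using B J C by (simp add: mat_ring_simps)
  show ?thesis
  proof (rule eq_matI)
    fix i j assume ij: "i < dim_row (?C * J * B)" "j < dim_col (?C * J * B)"
    have "(J + (z \<cdot>\<^sub>m (J * B) + cnj z \<cdot>\<^sub>m (?C * J))) $$ (i, j) = 0"
      using swapped ij B by simp
    then show "(mat_adjoint A * J * A) $$ (i, j) = (?C * J * B) $$ (i, j)"
      unfolding adjA unfolding normal using ij B J C
      by (simp add: mat_ring_simps algebra_simps unimodular unimodular' cancel neg_eq_iff_add_eq_0)
  qed (use B J C in \<open>auto simp: normal\<close>)
qed

lemma hamiltonian_column_sylvester_eq:
  fixes A B J U1 U2 R1 T1 S1 R2 T2 S2 :: "complex mat"
  assumes A: "A \<in> carrier_mat k k" and B: "B \<in> carrier_mat k k" and J: "J \<in> carrier_mat k k"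
    and U1: "U1 \<in> carrier_mat k r1" and U2: "U2 \<in> carrier_mat k r2"
    and R1: "R1 \<in> carrier_mat r1 r1" and T1: "T1 \<in> carrier_mat r1 r1" and S1: "S1 \<in> carrier_mat r1 r1"
    and R2: "R2 \<in> carrier_mat r2 r2" and T2: "T2 \<in> carrier_mat r2 r2" and S2: "S2 \<in> carrier_mat r2 r2"
    and AU1: "A * U1 * S1 = U1 * R1" and BU1: "B * U1 * S1 = U1 * T1"
    and AU2: "A * U2 * S2 = U2 * R2" and BU2: "B * U2 * S2 = U2 * T2"
    and column: "mat_adjoint A * J * B + mat_adjoint B * J * A = 0\<^sub>m k k"
  shows "(- mat_adjoint R2) * (mat_adjoint U2 * J * U1) * T1
    = mat_adjoint T2 * (mat_adjoint U2 * J * U1) * R1"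
proof -
  let ?X = "mat_adjoint U2 * J * U1" and ?V = "mat_adjoint S2 * mat_adjoint U2"
  have "?V * (mat_adjoint A * J * B + mat_adjoint B * J * A) * U1 * S1 = 0\<^sub>m r2 r1"
    unfolding column using U1 U2 S1 S2 by simp
  then have "mat_adjoint R2 * ?X * T1 + mat_adjoint T2 * ?X * R1 = 0\<^sub>m r2 r1"
    unfolding adjoint_sandwich[OF B A J U1 U2 S1 T1 S2 R2 BU1 AU2]
      adjoint_sandwich[OF A B J U1 U2 S1 R1 S2 T2 AU1 BU2]
    using A B J U1 U2 S1 S2 by (simp add: mat_ring_simps)
  then have "- (mat_adjoint R2 * ?X * T1) = mat_adjoint T2 * ?X * R1"
    by (rule minus_eq_of_add_eq_zero_mat[rotated 2]) (use R2 T2 R1 T1 U1 U2 J in auto)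
  then show ?thesis using R2 U2 J U1 T1 by simp
qed

lemma symplectic_column_sylvester_eq:
  fixes A B J U1 U2 R1 T1 S1 R2 T2 S2 :: "complex mat"
  assumes A: "A \<in> carrier_mat k k" and B: "B \<in> carrier_mat k k" and J: "J \<in> carrier_mat k k"
    and U1: "U1 \<in> carrier_mat k r1" and U2: "U2 \<in> carrier_mat k r2"
    and R1: "R1 \<in> carrier_mat r1 r1" and T1: "T1 \<in> carrier_mat r1 r1" and S1: "S1 \<in> carrier_mat r1 r1"
    and R2: "R2 \<in> carrier_mat r2 r2" and T2: "T2 \<in> carrier_mat r2 r2" and S2: "S2 \<in> carrier_mat r2 r2"
    and AU1: "A * U1 * S1 = U1 * R1" and BU1: "B * U1 * S1 = U1 * T1"
    and AU2: "A * U2 * S2 = U2 * R2" and BU2: "B * U2 * S2 = U2 * T2"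
    and column: "mat_adjoint A * J * A = mat_adjoint B * J * B"
  shows "mat_adjoint T2 * (mat_adjoint U2 * J * U1) * T1
    = mat_adjoint R2 * (mat_adjoint U2 * J * U1) * R1"
  unfolding adjoint_sandwich[OF B B J U1 U2 S1 T1 S2 T2 BU1 BU2]
    adjoint_sandwich[OF A A J U1 U2 S1 R1 S2 R2 AU1 AU2] column ..

lemma hamiltonian_pair_sylvester_eq:
  fixes J M L U1 U2 R1 T1 R2 T2 :: "complex mat"
  assumes J: "J \<in> carrier_mat k k" and JJ: "J * J = - 1\<^sub>m k"
    and M: "M \<in> carrier_mat k k" and L: "L \<in> carrier_mat k k" and reg: "regular_pair M L"
    and hamiltonian: "M * J * mat_adjoint L = - (L * J * mat_adjoint M)"
    and U1: "U1 \<in> carrier_mat k r1" and R1: "R1 \<in> carrier_mat r1 r1" and T1: "T1 \<in> carrier_mat r1 r1"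
    and U2: "U2 \<in> carrier_mat k r2" and R2: "R2 \<in> carrier_mat r2 r2" and T2: "T2 \<in> carrier_mat r2 r2"
    and def1: "M * U1 * T1 = L * U1 * R1" and def2: "M * U2 * T2 = L * U2 * R2"
  shows "(- mat_adjoint R2) * (mat_adjoint U2 * J * U1) * T1
    = mat_adjoint T2 * (mat_adjoint U2 * J * U1) * R1"
proof -
  obtain z where imag: "cnj z = - z" and det: "det (M - z \<cdot>\<^sub>m L) \<noteq> 0"
    using regular_pair_imaginary_point[OF M L reg] .
  obtain N where N: "N \<in> carrier_mat k k" and normal: "N * M = 1\<^sub>m k + z \<cdot>\<^sub>m (N * L)"
    using pencil_normal_form[OF M L det] .
  define A B where "A = N * M" and "B = N * L"
  have A: "A \<in> carrier_mat k k" and B: "B \<in> carrier_mat k k"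
    unfolding A_def B_def using N M L by auto
  have "A * J * mat_adjoint B = N * (M * J * mat_adjoint L) * mat_adjoint N"
    unfolding A_def B_def by (rule mult_adjoint_congruence[OF N M L J])
  also have "\<dots> = - (B * J * mat_adjoint A)"
    unfolding hamiltonian A_def B_def mult_adjoint_congruence[OF N L M J] using N L M J by simp
  finally have column: "mat_adjoint A * J * B + mat_adjoint B * J * A = 0\<^sub>m k k"
    using hamiltonian_normalized_column[OF B J JJ normal[folded A_def B_def] imag] by blast
  note deflating1 = normalized_pencil_deflating[OF B U1 T1 R1 normal[folded A_def B_def]
      deflating_mult_left[OF N M L U1 T1 R1 def1, folded A_def B_def]]
  note deflating2 = normalized_pencil_deflating[OF B U2 T2 R2 normal[folded A_def B_def]
      deflating_mult_left[OF N M L U2 T2 R2 def2, folded A_def B_def]]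
  have S1: "R1 - z \<cdot>\<^sub>m T1 \<in> carrier_mat r1 r1" and S2: "R2 - z \<cdot>\<^sub>m T2 \<in> carrier_mat r2 r2"
    using T1 T2 by (simp_all add: minus_carrier_mat)
  show ?thesis
    by (rule hamiltonian_column_sylvester_eq[OF A B J U1 U2 R1 T1 S1 R2 T2 S2 deflating1(2,1) deflating2(2,1) column])
qed

lemma symplectic_pair_sylvester_eq:
  fixes J M L U1 U2 R1 T1 R2 T2 :: "complex mat"
  assumes J: "J \<in> carrier_mat k k" and JJ: "J * J = - 1\<^sub>m k"
    and M: "M \<in> carrier_mat k k" and L: "L \<in> carrier_mat k k" and reg: "regular_pair M L"
    and symplectic: "M * J * mat_adjoint M = L * J * mat_adjoint L"
    and U1: "U1 \<in> carrier_mat k r1" and R1: "R1 \<in> carrier_mat r1 r1" and T1: "T1 \<in> carrier_mat r1 r1"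
    and U2: "U2 \<in> carrier_mat k r2" and R2: "R2 \<in> carrier_mat r2 r2" and T2: "T2 \<in> carrier_mat r2 r2"
    and def1: "M * U1 * T1 = L * U1 * R1" and def2: "M * U2 * T2 = L * U2 * R2"
  shows "mat_adjoint T2 * (mat_adjoint U2 * J * U1) * T1
    = mat_adjoint R2 * (mat_adjoint U2 * J * U1) * R1"
proof -
  obtain z where unimodular: "cnj z * z = 1" and det: "det (M - z \<cdot>\<^sub>m L) \<noteq> 0"
    using regular_pair_unimodular_point[OF M L reg] .
  obtain N where N: "N \<in> carrier_mat k k" and normal: "N * M = 1\<^sub>m k + z \<cdot>\<^sub>m (N * L)"
    using pencil_normal_form[OF M L det] .
  define A B where "A = N * M" and "B = N * L"
  have A: "A \<in> carrier_mat k k" and B: "B \<in> carrier_mat k k"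
    unfolding A_def B_def using N M L by auto
  have "A * J * mat_adjoint A = B * J * mat_adjoint B"
    unfolding A_def B_def mult_adjoint_congruence[OF N M M J] mult_adjoint_congruence[OF N L L J]
      symplectic ..
  then have column: "mat_adjoint A * J * A = mat_adjoint B * J * B"
    by (rule symplectic_normalized_column[OF B J JJ normal[folded A_def B_def] unimodular])
  note deflating1 = normalized_pencil_deflating[OF B U1 T1 R1 normal[folded A_def B_def]
      deflating_mult_left[OF N M L U1 T1 R1 def1, folded A_def B_def]]
  note deflating2 = normalized_pencil_deflating[OF B U2 T2 R2 normal[folded A_def B_def]
      deflating_mult_left[OF N M L U2 T2 R2 def2, folded A_def B_def]]
  have S1: "R1 - z \<cdot>\<^sub>m T1 \<in> carrier_mat r1 r1" and S2: "R2 - z \<cdot>\<^sub>m T2 \<in> carrier_mat r2 r2"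
    using T1 T2 by (simp_all add: minus_carrier_mat)
  show ?thesis
    by (rule symplectic_column_sylvester_eq[OF A B J U1 U2 R1 T1 S1 R2 T2 S2 deflating1(2,1) deflating2(2,1) column])
qed

theorem theorem2p2:
  fixes n r1 r2 :: nat
    and M L U1 U2 R1 T1 R2 T2 :: "complex mat"
  assumes dimML: "M \<in> carrier_mat (2*n) (2*n)" "L \<in> carrier_mat (2*n) (2*n)"
    and reg: "regular_pair M L"
    and RT1: "R1 \<in> carrier_mat r1 r1" "T1 \<in> carrier_mat r1 r1" "regular_pair R1 T1"
    and RT2: "R2 \<in> carrier_mat r2 r2" "T2 \<in> carrier_mat r2 r2" "regular_pair R2 T2"
    and U1: "U1 \<in> carrier_mat (2*n) r1" "full_column_rank U1"
    and U2: "U2 \<in> carrier_mat (2*n) r2" "full_column_rank U2"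
    and def1: "M * U1 * T1 = L * U1 * R1"
    and def2: "M * U2 * T2 = L * U2 * R2"
  shows "(hamiltonian_pair n M L \<and>
           pair_spectrum R1 T1 \<inter> pair_spectrum (- mat_adjoint R2) (mat_adjoint T2) = {}
           \<longrightarrow> mat_adjoint U2 * Jmat n * U1 = 0\<^sub>m r2 r1)
       \<and> (symplectic_pair n M L \<and>
           pair_spectrum R1 T1 \<inter> pair_spectrum (mat_adjoint T2) (mat_adjoint R2) = {}
           \<longrightarrow> mat_adjoint U2 * Jmat n * U1 = 0\<^sub>m r2 r1)"
proof -
  let ?X = "mat_adjoint U2 * Jmat n * U1"
  have X: "?X \<in> carrier_mat r2 r1" using U1 U2 by auto
  note setting = Jmat_carrier Jmat_squared dimML reg U1(1) RT1(1,2) U2(1) RT2(1,2) def1 def2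
  have "?X = 0\<^sub>m r2 r1"
    if "hamiltonian_pair n M L"
      and "pair_spectrum R1 T1 \<inter> pair_spectrum (- mat_adjoint R2) (mat_adjoint T2) = {}"
    using hamiltonian_pair_sylvester_eq[OF setting(1-5) _ setting(6-)]
      pencil_sylvester_unique[OF _ _ RT1(1,2) X regular_pair_neg_adjoint[OF RT2] RT1(3)] RT2 that
    unfolding hamiltonian_pair_def by auto
  moreover have "?X = 0\<^sub>m r2 r1"
    if "symplectic_pair n M L"
      and "pair_spectrum R1 T1 \<inter> pair_spectrum (mat_adjoint T2) (mat_adjoint R2) = {}"
    using symplectic_pair_sylvester_eq[OF setting(1-5) _ setting(6-)]
      pencil_sylvester_unique[OF _ _ RT1(1,2) X regular_pair_swap_adjoint[OF RT2] RT1(3)] RT2 that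
    unfolding symplectic_pair_def by auto
  ultimately show ?thesis by blast
qed

end
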